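(* Let $\kappa > 0$ and let $(X,d)$ be a complete CAT$(\kappa)$ space such that $d(v,w) < \pi/(2\sqrt{\kappa})$ for all $v,w \in X$. Let $f : X \to (-\infty,\infty]$ be a proper, convex and lower semi-continuous function which attains its minimum. Let $x_0 \in X$ and let $(\lambda_n)_{n\ge0}$ be a sequence of positive real numbers with $\sum_{n \ge 0}\lambda_n = \infty$. Define the sequence $(x_n)$ by \[ x_{n+1} = J_{\lambda_n}(x_n) = \operatorname{argmin}_{y \in X}\left[f(y) + \frac{1}{\lambda_n}\Psi_{x_n}(y)\right], \quad n \ge 0. \] Then $(x_n)$ $\Delta$-converges to a minimum point of $f$.
   Context: A geodesic space is a metric space in which any two points are joined by a geodesic segment; the point at distance $t\,d(x,y)$ from $x$ on such a segment is written $(1-t)x+ty$. A CAT$(\kappa)$ space ($\kappa>0$) is a metric space in which any two points at distance $<\pi/\sqrt{\kappa}$ are joined by a geodesic and every geodesic triangle of perimeter $<2\pi/\sqrt{\kappa}$ satisfies the CAT$(\kappa)$ comparison inequality with respect to its comparison triangle in the sphere of constant curvature $\kappa$. A function $f : X \to (-\infty,\infty]$ is proper if it is not identically $\infty$, and convex if $f((1-t)x+ty) \le (1-t)f(x)+tf(y)$ for all $x,y\in X$, $t\in[0,1]$. For $x \in X$, $\Psi_x : X \to [0,\infty)$ is defined by $\Psi_x(y) = \frac{1}{\kappa\cos(\sqrt{\kappa}\,d(y,x))} - \frac{\cos(\sqrt{\kappa}\,d(y,x))}{\kappa}$; for $\lambda>0$ the resolvent $J_\lambda(x) = \operatorname{argmin}_{y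 \in X}[f(y) + \frac{1}{\lambda}\Psi_x(y)]$ exists and is unique under the stated assumptions. $\Delta$-convergence: for a bounded sequence $(u_n)$ and $u \in X$ put $r(u,(u_n)) = \limsup_n d(u,u_n)$; the asymptotic radius is $r((u_n)) = \inf_{u\in X} r(u,(u_n))$ and the asymptotic center is $A((u_n)) = \{u \in X : r(u,(u_n)) = r((u_n))\}$. The sequence $(u_n)$ $\Delta$-converges to $u$ if $u$ is the unique point of the asymptotic center of every subsequence of $(u_n)$. *)

theory Defs
  imports "HOL-Analysis.Analysis"
begin

text \<open>Geodesic path from a to b: an isometric embedding of [0, d(a,b)] with
  endpoints a and b; the point (1-t)a + tb is gamma (t * dist a b).\<close>
definition geodesic_path :: "(real \<Rightarrow> 'a::metric_space) \<Rightarrow> 'a \<Rightarrow> 'a \<Rightarrow> bool" where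
  "geodesic_path \<gamma> a b \<longleftrightarrow> \<gamma> 0 = a \<and> \<gamma> (dist a b) = b \<and>
     (\<forall>s\<in>{0..dist a b}. \<forall>t\<in>{0..dist a b}. dist (\<gamma> s) (\<gamma> t) = \<bar>s - t\<bar>)"

text \<open>Model sphere of curvature kappa > 0: the sphere of radius 1/sqrt kappa in R^3
  with its intrinsic (great circle) metric.\<close>
definition model_sphere :: "real \<Rightarrow> (real^3) set" where
  "model_sphere \<kappa> = {v. norm v = 1 / sqrt \<kappa>}"

definition sph_dist :: "real \<Rightarrow> real^3 \<Rightarrow> real^3 \<Rightarrow> real" where
  "sph_dist \<kappa> u v = arccos (\<kappa> * (u \<bullet> v)) / sqrt \<kappa>"

text \<open>v is the comparison point on the (unique) model geodesic from A to B
  (of length L) at distance s from A.\<close>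
definition cmp_point :: "real \<Rightarrow> real^3 \<Rightarrow> real^3 \<Rightarrow> real \<Rightarrow> real \<Rightarrow> real^3 \<Rightarrow> bool" where
  "cmp_point \<kappa> A B L s v \<longleftrightarrow> v \<in> model_sphere \<kappa> \<and> sph_dist \<kappa> A v = s \<and> sph_dist \<kappa> v B = L - s"

definition CAT_space :: "real \<Rightarrow> 'a::metric_space itself \<Rightarrow> bool" where
  "CAT_space \<kappa> _ \<longleftrightarrow>
     (\<forall>x y::'a. dist x y < pi / sqrt \<kappa> \<longrightarrow> (\<exists>\<gamma>. geodesic_path \<gamma> x y)) \<and>
     (\<forall>p q r::'a. \<forall>\<gamma>1 \<gamma>2 \<gamma>3.
        dist p q + dist q r + dist r p < 2 * pi / sqrt \<kappa> \<and>
        geodesic_path \<gamma>1 p q \<and> geodesic_path \<gamma>2 q r \<and> geodesic_path \<gamma>3 r p \<longrightarrow>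
        (\<forall>P\<in>model_sphere \<kappa>. \<forall>Q\<in>model_sphere \<kappa>. \<forall>R\<in>model_sphere \<kappa>.
           sph_dist \<kappa> P Q = dist p q \<and> sph_dist \<kappa> Q R = dist q r \<and> sph_dist \<kappa> R P = dist r p \<longrightarrow>
           (\<forall>(a, b, \<gamma>, A, B) \<in> {(p, q, \<gamma>1, P, Q), (q, r, \<gamma>2, Q, R), (r, p, \<gamma>3, R, P)}.
            \<forall>(a', b', \<gamma>', A', B') \<in> {(p, q, \<gamma>1, P, Q), (q, r, \<gamma>2, Q, R), (r, p, \<gamma>3, R, P)}.
            \<forall>s\<in>{0..dist a b}. \<forall>s'\<in>{0..dist a' b'}. \<forall>v w.
              cmp_point \<kappa> A B (dist a b) s v \<and> cmp_point \<kappa> A' B' (dist a' b') s' w \<longrightarrow>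
              dist (\<gamma> s) (\<gamma>' s') \<le> sph_dist \<kappa> v w)))"

definition proper_fun :: "('a \<Rightarrow> ereal) \<Rightarrow> bool" where
  "proper_fun f \<longleftrightarrow> (\<exists>x. f x \<noteq> \<infinity>) \<and> (\<forall>x. f x \<noteq> -\<infinity>)"

definition geod_convex_fun :: "('a::metric_space \<Rightarrow> ereal) \<Rightarrow> bool" where
  "geod_convex_fun f \<longleftrightarrow>
     (\<forall>x y \<gamma> t. geodesic_path \<gamma> x y \<and> t \<in> {0..1} \<longrightarrow>
        f (\<gamma> (t * dist x y)) \<le> ereal (1 - t) * f x + ereal t * f y)"

definition lsc_fun :: "('a::topological_space \<Rightarrow> ereal) \<Rightarrow> bool" where
  "lsc_fun f \<longleftrightarrow> (\<forall>c. closed {x. f x \<le> c})"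

definition Psi :: "real \<Rightarrow> 'a::metric_space \<Rightarrow> 'a \<Rightarrow> real" where
  "Psi \<kappa> x y = 1 / (\<kappa> * cos (sqrt \<kappa> * dist y x)) - cos (sqrt \<kappa> * dist y x) / \<kappa>"

text \<open>The set of minimizers of y \<mapsto> f y + Psi_x(y)/lam (the resolvent J_lam(x) is its unique element).\<close>
definition resolvent_set :: "real \<Rightarrow> ('a::metric_space \<Rightarrow> ereal) \<Rightarrow> real \<Rightarrow> 'a \<Rightarrow> 'a set" where
  "resolvent_set \<kappa> f lam x =
     {y. \<forall>z. f y + ereal (Psi \<kappa> x y / lam) \<le> f z + ereal (Psi \<kappa> x z / lam)}"

definition asym_r :: "'a::metric_space \<Rightarrow> (nat \<Rightarrow> 'a) \<Rightarrow> ereal" where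
  "asym_r u s = limsup (\<lambda>n. ereal (dist u (s n)))"

definition asym_radius :: "(nat \<Rightarrow> 'a::metric_space) \<Rightarrow> ereal" where
  "asym_radius s = (INF u. asym_r u s)"

definition asym_center :: "(nat \<Rightarrow> 'a::metric_space) \<Rightarrow> 'a set" where
  "asym_center s = {u. asym_r u s = asym_radius s}"

definition Delta_converges :: "(nat \<Rightarrow> 'a::metric_space) \<Rightarrow> 'a \<Rightarrow> bool" where
  "Delta_converges s u \<longleftrightarrow> (\<forall>g. strict_mono g \<longrightarrow> asym_center (s \<circ> g) = {u})"

end

theory Submission
  imports Defs
begin

text \<open>For a minimizer \<open>p\<close> of \<open>f\<close>, convexity of \<open>f\<close> and the CAT(\<kappa>) comparison with the
  sphere make \<open>x\<^sub>n\<^sub>+\<^sub>1\<close> the point of the geodesic \<open>[x\<^sub>n\<^sub>+\<^sub>1, p]\<close> nearest to \<open>x\<^sub>n\<close>. The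
  spherical Pythagoras inequality then gives Fej\'er monotonicity \<open>d(x\<^sub>n\<^sub>+\<^sub>1, p) \<le> d(x\<^sub>n, p)\<close> and
  the descent estimate
  \<open>\<kappa> \<lambda>\<^sub>n (f(x\<^sub>n\<^sub>+\<^sub>1) - min f) \<le> K (cos(\<surd>\<kappa> d(x\<^sub>n\<^sub>+\<^sub>1, p)) - cos(\<surd>\<kappa> d(x\<^sub>n, p)))\<close>,
  which telescopes; since \<open>\<Sum> \<lambda>\<^sub>n = \<infinity>\<close>, \<open>f(x\<^sub>n) \<rightarrow> min f\<close>.

  For any subsequence, \<open>\<psi>(u) = cos(\<surd>\<kappa> limsup d(u, x\<^sub>n))\<close> satisfies the midpoint inequality
  \<open>\<psi>(u) + \<psi>(v) \<le> 2 cos(\<surd>\<kappa> d(u,v)/2) \<psi>(w)\<close> for the midpoint \<open>w\<close> of \<open>u\<close> and \<open>v\<close>, which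
  forces a unique maximizer: the asymptotic center is a single point. Comparing it with its
  projections onto the sublevel sets of \<open>f\<close> shows it is a minimizer, and since \<open>d(m, x\<^sub>n)\<close>
  converges for every minimizer \<open>m\<close>, all subsequences have the same asymptotic center.\<close>

lemma sph_dist_scaleR:
  fixes U V :: "real^3"
  assumes "\<kappa> > 0"
  shows "sph_dist \<kappa> ((1 / sqrt \<kappa>) *\<^sub>R U) ((1 / sqrt \<kappa>) *\<^sub>R V) = arccos (U \<bullet> V) / sqrt \<kappa>"
proof -
  have "\<kappa> * (((1 / sqrt \<kappa>) *\<^sub>R U) \<bullet> ((1 / sqrt \<kappa>) *\<^sub>R V)) = U \<bullet> V"
    using assms by (simp add: power2_eq_square[symmetric])
  then show ?thesis by (simp add: sph_dist_def)
qed

lemma scaleR_in_model_sphere_iff: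
  fixes U :: "real^3"
  assumes "\<kappa> > 0"
  shows "(1 / sqrt \<kappa>) *\<^sub>R U \<in> model_sphere \<kappa> \<longleftrightarrow> norm U = 1"
  using assms by (simp add: model_sphere_def)

lemma sph_dist_self:
  assumes "\<kappa> > 0" and "P \<in> model_sphere \<kappa>"
  shows "sph_dist \<kappa> P P = 0"
proof -
  have "\<kappa> * (P \<bullet> P) = 1"
    using assms by (simp add: model_sphere_def power2_norm_eq_inner[symmetric] power_divide)
  then show ?thesis by (simp add: sph_dist_def)
qed

text \<open>The third vertex is placed by the spherical law of cosines, which is solvable exactly
  under the triangle inequalities.\<close>
lemma unit_vectors_with_angles:
  fixes a b D :: real
  assumes "0 < D" "0 \<le> a" "0 \<le> b" "D + a < pi" "b \<le> D + a" "D \<le> a + b" "a \<le> D + b"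
  shows "\<exists>eP eQ eR :: real^3. norm eP = 1 \<and> norm eQ = 1 \<and> norm eR = 1 \<and>
     eP \<bullet> eQ = cos D \<and> eP \<bullet> eR = cos a \<and> eQ \<bullet> eR = cos b"
proof -
  have sD: "sin D > 0" using assms by (intro sin_gt_zero) auto
  define u where "u = (cos b - cos D * cos a) / sin D"
  have c1: "cos (D + a) \<le> cos b"
    using assms by (subst cos_mono_le_eq) auto
  have c2: "cos b \<le> cos (D - a)"
  proof (cases "D \<ge> a")
    case True then show ?thesis using assms by (subst cos_mono_le_eq) auto
  next
    case False
    have "cos (D - a) = cos (a - D)" by (metis cos_minus minus_diff_eq)
    then show ?thesis using assms False by (simp, subst cos_mono_le_eq) auto
  qed
  have sa: "sin a \<ge> 0" using assms by (intro sin_ge_zero) auto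
  have "\<bar>cos b - cos D * cos a\<bar> \<le> sin D * sin a"
    using c1 c2 by (simp add: cos_add cos_diff abs_le_iff)
  hence "\<bar>u\<bar> \<le> sin a" using sD by (simp add: u_def abs_div divide_le_eq mult.commute)
  hence u2: "u^2 \<le> (sin a)^2" using sa by (metis abs_le_square_iff abs_of_nonneg)
  define w where "w = sqrt ((sin a)^2 - u^2)"
  have w2: "w^2 = (sin a)^2 - u^2" using u2 by (simp add: w_def)
  define eP :: "real^3" where "eP = vector [1, 0, 0]"
  define eQ :: "real^3" where "eQ = vector [cos D, sin D, 0]"
  define eR :: "real^3" where "eR = vector [cos a, u, w]"
  have "norm eP = 1" by (simp add: eP_def norm_eq_sqrt_inner inner_vec_def sum_3)
  moreover have "norm eQ = 1"
    by (simp add: eQ_def norm_eq_sqrt_inner inner_vec_def sum_3 power2_eq_square[symmetric])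
  moreover have "eR \<bullet> eR = (cos a)^2 + u^2 + w^2"
    by (simp add: eR_def inner_vec_def sum_3 power2_eq_square)
  then have "norm eR = 1" using w2 by (simp add: norm_eq_sqrt_inner sin_squared_eq)
  moreover have "eP \<bullet> eQ = cos D" "eP \<bullet> eR = cos a"
    by (simp_all add: eP_def eQ_def eR_def inner_vec_def sum_3)
  moreover have "eQ \<bullet> eR = cos D * cos a + sin D * u"
    by (simp add: eQ_def eR_def inner_vec_def sum_3)
  then have "eQ \<bullet> eR = cos b" using sD by (simp add: u_def)
  ultimately show ?thesis by blast
qed

lemma slerp:
  fixes eP eQ :: "real^3" and t D :: real
  assumes "norm eP = 1" "norm eQ = 1" "eP \<bullet> eQ = cos D" "sin D > 0"
  defines "V \<equiv> (sin ((1-t)*D) / sin D) *\<^sub>R eP + (sin (t*D) / sin D) *\<^sub>R eQ"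
  shows "norm V = 1" "eP \<bullet> V = cos (t*D)" "V \<bullet> eQ = cos ((1-t)*D)"
    "\<And>eR. V \<bullet> eR = (sin ((1-t)*D) * (eP \<bullet> eR) + sin (t*D) * (eQ \<bullet> eR)) / sin D"
proof -
  have s1: "sin ((1-t)*D) = sin D * cos (t*D) - cos D * sin (t*D)"
    by (metis left_diff_distrib' mult_1 sin_diff)
  have c1: "cos ((1-t)*D) = cos D * cos (t*D) + sin D * sin (t*D)"
    by (metis left_diff_distrib' mult_1 cos_diff)
  have s1': "sin (D - D*t) = sin D * cos (D*t) - cos D * sin (D*t)"
    using s1 by (simp add: algebra_simps)
  have c1': "cos (D - D*t) = cos D * cos (D*t) + sin D * sin (D*t)"
    using c1 by (simp add: algebra_simps)
  have unit: "eP \<bullet> eP = 1" "eQ \<bullet> eQ = 1" using assms(1,2) by (simp_all add: norm_eq_sqrt_inner)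
  have QP: "eQ \<bullet> eP = cos D" using assms(3) by (simp add: inner_commute)
  have pyth: "cos D * (cos D * X) + sin D * (sin D * X) = X" for X
    by (metis sin_cos_squared_add3 distrib_right mult.assoc mult_1)
  show "eP \<bullet> V = cos (t*D)"
    using assms(4) by (simp add: V_def inner_add_right unit assms(3) s1 field_simps s1')
  show "V \<bullet> eQ = cos ((1-t)*D)"
    using assms(4) pyth[of "sin (D*t)"]
    by (simp add: V_def inner_add_left unit QP s1 c1 field_simps s1' c1' assms(3))
  show "\<And>eR. V \<bullet> eR = (sin ((1-t)*D) * (eP \<bullet> eR) + sin (t*D) * (eQ \<bullet> eR)) / sin D"
    by (simp add: V_def inner_add_left add_divide_distrib)
  have "V \<bullet> V = ((sin ((1-t)*D))^2 + 2 * sin ((1-t)*D) * sin (t*D) * cos D + (sin (t*D))^2) / (sin D)^2"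
    using assms(4)
    by (simp add: V_def inner_add_left inner_add_right unit QP assms(3) field_simps power2_eq_square)
  also have "(sin ((1-t)*D))^2 + 2 * sin ((1-t)*D) * sin (t*D) * cos D + (sin (t*D))^2
      = (sin ((1-t)*D) + sin (t*D) * cos D)^2 + (sin (t*D))^2 * (sin D)^2"
    by (simp add: power2_eq_square algebra_simps pyth)
  also have "sin ((1-t)*D) + sin (t*D) * cos D = sin D * cos (t*D)" by (simp add: s1)
  also have "(sin D * cos (t*D))^2 + (sin (t*D))^2 * (sin D)^2 = (sin D)^2"
    by (simp add: power_mult_distrib algebra_simps flip: distrib_left)
  finally show "norm V = 1" using assms(4) by (simp add: norm_eq_sqrt_inner)
qed

lemma difference_quotient_sin_bound:
  fixes D L \<alpha> \<beta> :: real
  assumes D: "D > 0"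
    and H: "\<And>t. 0 < t \<Longrightarrow> t \<le> 1 \<Longrightarrow> L \<le> ((sin D - sin ((1-t)*D)) * \<alpha> - sin (t*D) * \<beta>) / t"
  shows "L \<le> D * cos D * \<alpha> - D * \<beta>"
proof -
  have "((\<lambda>t. sin ((1-t)*D)) has_field_derivative cos ((1-0)*D) * (-D)) (at_right 0)"
    by (auto intro!: derivative_eq_intros)
  hence d1: "((\<lambda>t. (sin ((1-t)*D) - sin D) / t) \<longlongrightarrow> - D * cos D) (at_right 0)"
    by (simp add: has_field_derivative_iff mult.commute)
  have "((\<lambda>t. sin (t*D)) has_field_derivative cos (0*D) * D) (at_right 0)"
    by (auto intro!: derivative_eq_intros)
  hence d2: "((\<lambda>t. sin (t*D) / t) \<longlongrightarrow> D) (at_right 0)"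
    by (simp add: has_field_derivative_iff mult.commute)
  have lim: "((\<lambda>t. - ((sin ((1-t)*D) - sin D) / t) * \<alpha> - (sin (t*D) / t) * \<beta>)
      \<longlongrightarrow> D * cos D * \<alpha> - D * \<beta>) (at_right 0)"
    using tendsto_diff[OF tendsto_mult[OF tendsto_minus[OF d1] tendsto_const[of \<alpha>]]
        tendsto_mult[OF d2 tendsto_const[of \<beta>]]]
    by simp
  have "eventually (\<lambda>t. t \<in> {0<..<1}) (at_right (0::real))"
    by (rule eventually_at_right_real) simp
  then have "eventually (\<lambda>t. L \<le> - ((sin ((1-t)*D) - sin D) / t) * \<alpha> - (sin (t*D) / t) * \<beta>)
      (at_right 0)"
  proof (rule eventually_mono)
    fix t :: real assume t: "t \<in> {0<..<1}"
    have "L \<le> ((sin D - sin ((1-t)*D)) * \<alpha> - sin (t*D) * \<beta>) / t" using H t by auto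
    also have "\<dots> = - ((sin ((1-t)*D) - sin D) / t) * \<alpha> - (sin (t*D) / t) * \<beta>"
      using t by (simp add: field_simps)
    finally show "L \<le> \<dots>" .
  qed
  then show ?thesis by (intro tendsto_lowerbound[OF lim]) simp_all
qed

lemma le_three_sin:
  fixes x :: real
  assumes "0 \<le> x" "x \<le> 2"
  shows "x \<le> 3 * sin x"
proof -
  have "\<bar>sin x - (\<Sum>m<3. sin_coeff m * x ^ m)\<bar> \<le> inverse (fact 3) * \<bar>x\<bar> ^ 3"
    by (rule Maclaurin_sin_bound)
  moreover have "(\<Sum>m<3. sin_coeff m * x ^ m) = x"
    by (simp add: numeral_3_eq_3 sin_coeff_def)
  moreover have "inverse (fact 3) * \<bar>x\<bar> ^ 3 = x^3 / 6"
    using assms by (simp add: numeral_3_eq_3 field_simps)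
  ultimately have "\<bar>sin x - x\<bar> \<le> x^3 / 6" by simp
  then have "x - x^3 / 6 \<le> sin x" by linarith
  moreover have "x^3 \<le> 4 * x"
  proof -
    have "x * x \<le> 2 * 2" using assms by (intro mult_mono) auto
    hence "(x * x) * x \<le> 4 * x" using assms by (intro mult_right_mono) auto
    then show ?thesis by (simp add: power3_eq_cube)
  qed
  ultimately show ?thesis by linarith
qed

lemma sin_add_le:
  fixes \<alpha> \<beta> :: real
  assumes "0 \<le> \<alpha>" "0 \<le> \<beta>" "\<alpha> + \<beta> \<le> pi"
  shows "sin (\<alpha> + \<beta>) \<le> sin \<alpha> + sin \<beta>"
proof -
  have "sin \<alpha> \<ge> 0" "sin \<beta> \<ge> 0" using assms by (auto intro!: sin_ge_zero)
  then have "sin \<alpha> * cos \<beta> \<le> sin \<alpha> * 1" "cos \<alpha> * sin \<beta> \<le> 1 * sin \<beta>"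
    by (intro mult_left_mono mult_right_mono; simp)+
  then show ?thesis by (simp add: sin_add)
qed

lemma abs_cos_diff_le: "\<bar>cos x - cos y\<bar> \<le> \<bar>x - y\<bar>" for x y :: real
proof -
  have *: "\<bar>cos x - cos y\<bar> \<le> \<bar>x - y\<bar>" if xy: "x < y" for x y :: real
  proof -
    obtain z where "cos y - cos x = (y - x) * - sin z"
      using MVT2[OF xy, of cos "\<lambda>z. - sin z"] by (auto intro: derivative_eq_intros)
    then have "cos x - cos y = (y - x) * sin z" by (simp add: algebra_simps)
    then have "\<bar>cos x - cos y\<bar> = (y - x) * \<bar>sin z\<bar>" using xy by (simp add: abs_mult)
    also have "\<dots> \<le> y - x" using xy by (simp add: mult_left_le)
    finally show ?thesis using xy by simp
  qed
  show ?thesis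
    by (cases x y rule: linorder_cases) (use *[of x y] *[of y x] in \<open>auto simp: abs_minus_commute\<close>)
qed

lemma cos_ge_cos_minus:
  fixes a b e :: real
  assumes "0 \<le> a" "0 \<le> b" "b \<le> pi" "a < b + e" "0 \<le> e"
  shows "cos b - e \<le> cos a"
proof (cases "a \<le> b")
  case True then show ?thesis using assms cos_monotone_0_pi_le[of a b] by linarith
next
  case False then show ?thesis using assms abs_cos_diff_le[of a b] by linarith
qed

lemma Psi_cos:
  "Psi \<kappa> x z = 1 / (\<kappa> * cos (sqrt \<kappa> * dist x z)) - cos (sqrt \<kappa> * dist x z) / \<kappa>"
  by (simp add: Psi_def dist_commute)

lemma Psi_self: "Psi \<kappa> x x = 0"
  by (simp add: Psi_def)

definition geod_convex_set :: "'a::metric_space set \<Rightarrow> bool" where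
  "geod_convex_set S \<longleftrightarrow> (\<forall>u\<in>S. \<forall>v\<in>S. \<forall>\<gamma> s.
     geodesic_path \<gamma> u v \<and> 0 \<le> s \<and> s \<le> dist u v \<longrightarrow> \<gamma> s \<in> S)"

definition asym_dist :: "(nat \<Rightarrow> 'a::metric_space) \<Rightarrow> 'a \<Rightarrow> real" where
  "asym_dist s u = real_of_ereal (asym_r u s)"

locale small_CAT =
  fixes \<kappa> :: real and ty :: "'a::metric_space itself"
  assumes kappa_pos: "\<kappa> > 0" and CAT: "CAT_space \<kappa> TYPE('a)"
    and diameter: "\<And>v w::'a. dist v w < pi / (2 * sqrt \<kappa>)"
begin

lemma sqrt_kappa_pos: "sqrt \<kappa> > 0"
  using kappa_pos by simp

lemma scaled_dist_bounds: "0 \<le> sqrt \<kappa> * dist (v::'a) w" "sqrt \<kappa> * dist v w < pi / 2"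
  using diameter[of v w] sqrt_kappa_pos by (simp_all add: field_simps)

lemma geodesic_exists: "\<exists>\<gamma>. geodesic_path \<gamma> (u::'a) v"
proof -
  have "dist u v < pi / sqrt \<kappa>"
    using diameter[of u v] sqrt_kappa_pos by (smt (verit) divide_pos_pos frac_less2 pi_gt_zero)
  then show ?thesis using CAT unfolding CAT_space_def by blast
qed

lemma cos_scaled_dist_le_iff:
  "cos (sqrt \<kappa> * dist (a::'a) b) \<le> cos (sqrt \<kappa> * dist (c::'a) d) \<longleftrightarrow> dist c d \<le> dist a b"
proof -
  have "cos (sqrt \<kappa> * dist a b) \<le> cos (sqrt \<kappa> * dist c d) \<longleftrightarrow>
      sqrt \<kappa> * dist c d \<le> sqrt \<kappa> * dist a b"
    using scaled_dist_bounds[of a b] scaled_dist_bounds[of c d] by (intro cos_mono_le_eq) auto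
  then show ?thesis using sqrt_kappa_pos by simp
qed

lemma cos_scaled_dist_pos: "cos (sqrt \<kappa> * dist (a::'a) b) > 0"
  using scaled_dist_bounds[of a b] by (intro cos_gt_zero_pi) auto

text \<open>The CAT(\<kappa>) condition only compares points on sides, so the vertex \<open>r\<close> enters as the
  initial point of the side \<open>[r, p]\<close>, with comparison point \<open>R\<close>.\<close>
lemma CAT_dist_to_vertex:
  fixes p q r :: 'a
  assumes g: "geodesic_path \<gamma> p q"
    and PQR: "P \<in> model_sphere \<kappa>" "Q \<in> model_sphere \<kappa>" "R \<in> model_sphere \<kappa>"
    and sides: "sph_dist \<kappa> P Q = dist p q" "sph_dist \<kappa> Q R = dist q r" "sph_dist \<kappa> R P = dist r p"
    and s: "s \<in> {0..dist p q}" and v: "cmp_point \<kappa> P Q (dist p q) s v"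
  shows "dist (\<gamma> s) r \<le> sph_dist \<kappa> v R"
proof -
  obtain \<gamma>2 \<gamma>3 where g2: "geodesic_path \<gamma>2 q r" and g3: "geodesic_path \<gamma>3 r p"
    using geodesic_exists by blast
  have "dist p q + dist q r + dist r p < 3 * (pi / (2 * sqrt \<kappa>))"
    using diameter[of p q] diameter[of q r] diameter[of r p] by linarith
  also have "\<dots> \<le> 2 * pi / sqrt \<kappa>"
    using sqrt_kappa_pos by (simp add: field_simps)
  finally have perimeter: "dist p q + dist q r + dist r p < 2 * pi / sqrt \<kappa>" .
  have R: "cmp_point \<kappa> R P (dist r p) 0 R"
    using PQR sides sph_dist_self[OF kappa_pos] by (simp add: cmp_point_def)
  have "dist (\<gamma> s) (\<gamma>3 0) \<le> sph_dist \<kappa> v R"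
    using CAT[unfolded CAT_space_def, THEN conjunct2, rule_format,
        OF conjI[OF perimeter conjI[OF g conjI[OF g2 g3]]] PQR conjI[OF sides(1) conjI[OF sides(2,3)]],
        of "(p, q, \<gamma>, P, Q)"] s v R
    by auto
  then show ?thesis using g3 by (simp add: geodesic_path_def)
qed

lemma comparison_triangle:
  fixes x y p :: 'a
  assumes "y \<noteq> p"
  obtains eP eQ eR :: "real^3" where "norm eP = 1" "norm eQ = 1" "norm eR = 1"
    "eP \<bullet> eQ = cos (sqrt \<kappa> * dist y p)" "eP \<bullet> eR = cos (sqrt \<kappa> * dist x y)"
    "eQ \<bullet> eR = cos (sqrt \<kappa> * dist x p)"
proof -
  have "0 < sqrt \<kappa> * dist y p" using assms sqrt_kappa_pos by simp
  moreover have "sqrt \<kappa> * dist y p + sqrt \<kappa> * dist x y < pi"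
    using scaled_dist_bounds(2)[of y p] scaled_dist_bounds(2)[of x y] by linarith
  moreover have "sqrt \<kappa> * dist x p \<le> sqrt \<kappa> * dist y p + sqrt \<kappa> * dist x y"
    "sqrt \<kappa> * dist y p \<le> sqrt \<kappa> * dist x y + sqrt \<kappa> * dist x p"
    "sqrt \<kappa> * dist x y \<le> sqrt \<kappa> * dist y p + sqrt \<kappa> * dist x p"
    using sqrt_kappa_pos dist_triangle[of x p y] dist_triangle[of y p x] dist_triangle[of x y p]
    by (auto simp: dist_commute distrib_left[symmetric])
  ultimately show ?thesis
    using unit_vectors_with_angles[OF _ scaled_dist_bounds(1) scaled_dist_bounds(1)] that by blast
qed

text \<open>The comparison point on the side \<open>[P, Q]\<close> is the spherical linear interpolation of \<open>P\<close>
  and \<open>Q\<close>, whose inner product with \<open>R\<close> is linear in the cosines of the other two sides.\<close>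
lemma cos_dist_geodesic_ge:
  fixes x y p :: 'a
  assumes g: "geodesic_path \<gamma> y p" and yp: "y \<noteq> p" and t: "0 \<le> t" "t \<le> 1"
  shows "sin ((1-t) * (sqrt \<kappa> * dist y p)) * cos (sqrt \<kappa> * dist x y)
      + sin (t * (sqrt \<kappa> * dist y p)) * cos (sqrt \<kappa> * dist x p)
    \<le> sin (sqrt \<kappa> * dist y p) * cos (sqrt \<kappa> * dist x (\<gamma> (t * dist y p)))"
proof -
  define D where "D = sqrt \<kappa> * dist y p"
  define a where "a = sqrt \<kappa> * dist x y"
  define b where "b = sqrt \<kappa> * dist x p"
  have D0: "D > 0" using yp sqrt_kappa_pos by (simp add: D_def)
  have small: "D < pi/2" "a < pi/2" "b < pi/2" "a \<ge> 0" "b \<ge> 0"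
    using scaled_dist_bounds by (auto simp: D_def a_def b_def)
  obtain eP eQ eR :: "real^3" where e: "norm eP = 1" "norm eQ = 1" "norm eR = 1"
    "eP \<bullet> eQ = cos D" "eP \<bullet> eR = cos a" "eQ \<bullet> eR = cos b"
    using comparison_triangle[OF yp, of x] unfolding D_def a_def b_def by metis
  have sD: "sin D > 0" using D0 small by (intro sin_gt_zero) auto
  define V where "V = (sin ((1-t)*D) / sin D) *\<^sub>R eP + (sin (t*D) / sin D) *\<^sub>R eQ"
  note V = slerp[OF e(1,2,4) sD, of t, folded V_def]
  define c :: "real^3 \<Rightarrow> real^3" where "c U = (1 / sqrt \<kappa>) *\<^sub>R U" for U
  have "t * D \<le> D" "(1-t) * D \<le> D" using t D0 by (simp_all add: mult_left_le_one_le)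
  moreover have "0 \<le> t * D" "0 \<le> (1-t) * D" using t D0 by simp_all
  ultimately have tD: "0 \<le> t * D" "t * D \<le> pi" "0 \<le> (1-t) * D" "(1-t) * D \<le> pi"
    using small by linarith+
  have on_sphere: "c eP \<in> model_sphere \<kappa>" "c eQ \<in> model_sphere \<kappa>" "c eR \<in> model_sphere \<kappa>"
    "c V \<in> model_sphere \<kappa>"
    using e V kappa_pos by (simp_all add: c_def scaleR_in_model_sphere_iff)
  have sides: "sph_dist \<kappa> (c eP) (c eQ) = dist y p" "sph_dist \<kappa> (c eQ) (c eR) = dist p x"
    "sph_dist \<kappa> (c eR) (c eP) = dist x y"
    using e kappa_pos small D0 arccos_cos[of D] arccos_cos[of a] arccos_cos[of b]
    by (simp_all add: c_def sph_dist_scaleR D_def a_def b_def dist_commute inner_commute)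
  have "sph_dist \<kappa> (c eP) (c V) = t * dist y p" "sph_dist \<kappa> (c V) (c eQ) = dist y p - t * dist y p"
    using kappa_pos V tD arccos_cos[of "t * D"] arccos_cos[of "(1-t) * D"] sqrt_kappa_pos
    by (simp_all add: c_def sph_dist_scaleR D_def field_simps)
  then have "cmp_point \<kappa> (c eP) (c eQ) (dist y p) (t * dist y p) (c V)"
    using on_sphere by (simp add: cmp_point_def)
  then have "dist (\<gamma> (t * dist y p)) x \<le> sph_dist \<kappa> (c V) (c eR)"
    using CAT_dist_to_vertex[OF g on_sphere(1-3) sides] t by (simp add: mult_left_le_one_le)
  then have le: "sqrt \<kappa> * dist x (\<gamma> (t * dist y p)) \<le> arccos (V \<bullet> eR)"
    using kappa_pos sqrt_kappa_pos by (simp add: c_def sph_dist_scaleR dist_commute field_simps)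
  have "\<bar>V \<bullet> eR\<bar> \<le> 1" using Cauchy_Schwarz_ineq2[of V eR] V e by simp
  then have "V \<bullet> eR \<le> cos (sqrt \<kappa> * dist x (\<gamma> (t * dist y p)))"
    using cos_monotone_0_pi_le[OF _ le] scaled_dist_bounds
    by (simp add: arccos arccos_ubound abs_le_iff)
  then show ?thesis using V(4)[of eR] e sD by (simp add: D_def a_def b_def field_simps)
qed

text \<open>If \<open>y\<close> is a point of the geodesic \<open>[y, p]\<close> nearest to \<open>x\<close>, the comparison angle at \<open>y\<close>
  is at least a right angle; this is the resulting spherical Pythagoras inequality.\<close>
lemma cos_dist_le_of_nearest:
  fixes x y p :: 'a
  assumes g: "geodesic_path \<gamma> y p"
    and nearest: "\<And>s. 0 \<le> s \<Longrightarrow> s \<le> dist y p \<Longrightarrow> dist x y \<le> dist x (\<gamma> s)"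
  shows "cos (sqrt \<kappa> * dist x p) \<le> cos (sqrt \<kappa> * dist x y) * cos (sqrt \<kappa> * dist y p)"
proof (cases "y = p")
  case False
  define D where "D = sqrt \<kappa> * dist y p"
  have D0: "D > 0" using False sqrt_kappa_pos by (simp add: D_def)
  have "0 \<le> ((sin D - sin ((1-t)*D)) * cos (sqrt \<kappa> * dist x y) - sin (t*D) * cos (sqrt \<kappa> * dist x p)) / t"
    if t: "0 < t" "t \<le> 1" for t
  proof -
    have "sin ((1-t) * D) * cos (sqrt \<kappa> * dist x y) + sin (t * D) * cos (sqrt \<kappa> * dist x p)
       \<le> sin D * cos (sqrt \<kappa> * dist x (\<gamma> (t * dist y p)))"
      using cos_dist_geodesic_ge[OF g False, of t x] t by (simp add: D_def)
    also have "\<dots> \<le> sin D * cos (sqrt \<kappa> * dist x y)"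
    proof (rule mult_left_mono)
      show "cos (sqrt \<kappa> * dist x (\<gamma> (t * dist y p))) \<le> cos (sqrt \<kappa> * dist x y)"
        using nearest[of "t * dist y p"] t by (simp add: cos_scaled_dist_le_iff mult_left_le_one_le)
      show "0 \<le> sin D" using D0 scaled_dist_bounds[of y p] by (intro sin_ge_zero) (auto simp: D_def)
    qed
    finally show ?thesis using t by (simp add: algebra_simps)
  qed
  from difference_quotient_sin_bound[OF D0, of 0, OF this]
  have "0 \<le> D * (cos D * cos (sqrt \<kappa> * dist x y) - cos (sqrt \<kappa> * dist x p))"
    by (simp add: algebra_simps)
  then show ?thesis using D0 by (simp add: zero_le_mult_iff D_def mult.commute)
qed simp

lemma dist_geodesic_le_of_nearest:
  fixes x y p :: 'a
  assumes g: "geodesic_path \<gamma> y p"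
    and nearest: "\<And>s. 0 \<le> s \<Longrightarrow> s \<le> dist y p \<Longrightarrow> dist x y \<le> dist x (\<gamma> s)"
    and t: "0 \<le> t" "t \<le> 1"
  shows "dist x (\<gamma> (t * dist y p)) \<le> dist x p"
proof (cases "y = p")
  case True
  then show ?thesis using g by (simp add: geodesic_path_def)
next
  case False
  define ca where "ca = cos (sqrt \<kappa> * dist x y)"
  define cb where "cb = cos (sqrt \<kappa> * dist x p)"
  define ct where "ct = cos (sqrt \<kappa> * dist x (\<gamma> (t * dist y p)))"
  define D where "D = sqrt \<kappa> * dist y p"
  have D: "0 < D" "D < pi/2" using False sqrt_kappa_pos scaled_dist_bounds by (auto simp: D_def)
  have "cb \<le> ca * cos D" using cos_dist_le_of_nearest[OF g nearest] by (simp add: ca_def cb_def D_def)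
  moreover have "0 < ca" "ca \<le> 1" "0 \<le> cos D" "cos D \<le> 1"
    using cos_scaled_dist_pos D by (auto simp: ca_def intro!: cos_ge_zero)
  ultimately have cab: "cb \<le> ca" by (smt (verit) mult_left_le)
  have tD: "0 \<le> t * D" "0 \<le> (1-t) * D" using t D by auto
  have "t * D \<le> D" "(1-t) * D \<le> D" using t D by (simp_all add: mult_left_le_one_le)
  then have sin_nonneg: "0 \<le> sin ((1-t)*D)" "0 \<le> sin (t*D)"
    using sin_ge_zero[of "(1-t)*D"] sin_ge_zero[of "t*D"] tD D by linarith+
  have "sin D \<le> sin ((1-t)*D) + sin (t*D)"
    using sin_add_le[of "(1-t)*D" "t*D"] tD D by (simp add: algebra_simps)
  then have "sin D * cb \<le> (sin ((1-t)*D) + sin (t*D)) * cb"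
    using cos_scaled_dist_pos[of x p] by (intro mult_right_mono) (auto simp: cb_def)
  also have "\<dots> \<le> sin ((1-t) * D) * ca + sin (t * D) * cb"
    using sin_nonneg cab by (simp add: distrib_right mult_left_mono)
  also have "\<dots> \<le> sin D * ct"
    using cos_dist_geodesic_ge[OF g False t, of x] by (simp add: D_def ca_def cb_def ct_def)
  finally have "cb \<le> ct" using D by (simp add: sin_gt_zero)
  then show ?thesis by (simp add: cb_def ct_def cos_scaled_dist_le_iff)
qed

lemma cos_dist_midpoint_ge:
  fixes x u v :: 'a
  assumes g: "geodesic_path \<gamma> u v"
  shows "cos (sqrt \<kappa> * dist x u) + cos (sqrt \<kappa> * dist x v)
    \<le> 2 * cos (sqrt \<kappa> * dist u v / 2) * cos (sqrt \<kappa> * dist x (\<gamma> (dist u v / 2)))"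
proof (cases "u = v")
  case True then show ?thesis using g by (simp add: geodesic_path_def)
next
  case False
  define D where "D = sqrt \<kappa> * dist u v"
  have D0: "D > 0" using False sqrt_kappa_pos by (simp add: D_def)
  have s2: "sin (D/2) > 0" using D0 scaled_dist_bounds[of u v] by (intro sin_gt_zero) (auto simp: D_def)
  have "sin (D/2) * (cos (sqrt \<kappa> * dist x u) + cos (sqrt \<kappa> * dist x v))
      \<le> sin D * cos (sqrt \<kappa> * dist x (\<gamma> (1/2 * dist u v)))"
    using cos_dist_geodesic_ge[OF g False, of "1/2" x] by (simp add: D_def algebra_simps)
  also have "sin D = sin (D/2) * (2 * cos (D/2))" using sin_double[of "D/2"] by simp
  finally show ?thesis using s2 by (simp add: D_def mult.assoc)
qed

lemma Psi_nonneg: "0 \<le> Psi \<kappa> (x::'a) y"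
proof -
  define c where "c = cos (sqrt \<kappa> * dist x y)"
  have c: "0 < c" "c \<le> 1" using cos_scaled_dist_pos[of x y] by (auto simp: c_def)
  have "c / \<kappa> \<le> 1 / \<kappa>" using c kappa_pos by (simp add: divide_right_mono)
  also have "1 / \<kappa> \<le> 1 / (\<kappa> * c)" using c kappa_pos by (intro divide_left_mono) (auto simp: mult_left_le)
  finally show ?thesis by (simp add: Psi_cos c_def)
qed

lemma Psi_le_imp_dist_le:
  assumes "Psi \<kappa> (x::'a) y \<le> Psi \<kappa> x z"
  shows "dist x y \<le> dist x z"
proof (rule ccontr)
  assume "\<not> dist x y \<le> dist x z"
  define cy where "cy = cos (sqrt \<kappa> * dist x y)"
  define cz where "cz = cos (sqrt \<kappa> * dist x z)"
  have c: "0 < cy" "cy < cz"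
    using cos_scaled_dist_pos \<open>\<not> dist x y \<le> dist x z\<close> cos_scaled_dist_le_iff[of x z x y]
    by (auto simp: cy_def cz_def)
  have "1 / (\<kappa> * cz) < 1 / (\<kappa> * cy)" using c kappa_pos by (intro divide_strict_left_mono) auto
  moreover have "cy / \<kappa> < cz / \<kappa>" using c kappa_pos by (simp add: divide_strict_right_mono)
  ultimately have "Psi \<kappa> x z < Psi \<kappa> x y" by (simp add: Psi_cos cy_def cz_def)
  then show False using assms by simp
qed

lemma Psi_diff_le:
  fixes x y z :: 'a
  assumes c0: "0 < c0" "c0 \<le> cos (sqrt \<kappa> * dist x z)" and yz: "dist x y \<le> dist x z"
  shows "\<kappa> * (Psi \<kappa> x z - Psi \<kappa> x y)
    \<le> (1 + 1/c0^2) * (cos (sqrt \<kappa> * dist x y) - cos (sqrt \<kappa> * dist x z))"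
proof -
  define cy where "cy = cos (sqrt \<kappa> * dist x y)"
  define cz where "cz = cos (sqrt \<kappa> * dist x z)"
  have c: "c0 \<le> cz" "cz \<le> cy" using c0 yz by (simp_all add: cy_def cz_def cos_scaled_dist_le_iff)
  have "\<kappa> * (Psi \<kappa> x z - Psi \<kappa> x y) = (1 + 1/(cy*cz)) * (cy - cz)"
    using c c0 kappa_pos by (simp add: Psi_cos cy_def[symmetric] cz_def[symmetric] field_simps)
  also have "\<dots> \<le> (1 + 1/c0^2) * (cy - cz)"
  proof (rule mult_right_mono)
    have "c0 * c0 \<le> cy * cz" using c c0 by (intro mult_mono) auto
    then show "1 + 1/(cy*cz) \<le> 1 + 1/c0^2" using c0 by (simp add: power2_eq_square frac_le)
  qed (use c in simp)
  finally show ?thesis by (simp add: cy_def cz_def)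
qed

text \<open>Letting \<open>t \<rightarrow> 0\<close> in the comparison inequality along \<open>[y, p]\<close> bounds the slope \<open>L\<close>; the
  factor 3 comes from \<open>D \<le> 3 sin D\<close> for \<open>D < \<pi>/2\<close>.\<close>
lemma Psi_slope_bound:
  fixes x y p :: 'a
  assumes g: "geodesic_path \<gamma> y p"
    and nearest: "\<And>s. 0 \<le> s \<Longrightarrow> s \<le> dist y p \<Longrightarrow> dist x y \<le> dist x (\<gamma> s)"
    and c0: "0 < c0" "c0 \<le> cos (sqrt \<kappa> * dist x p)"
    and slope: "\<And>t. 0 < t \<Longrightarrow> t \<le> 1 \<Longrightarrow> t * L \<le> Psi \<kappa> x (\<gamma> (t * dist y p)) - Psi \<kappa> x y"
  shows "\<kappa> * L \<le> 3 * (1 + 1/c0^2) * (cos (sqrt \<kappa> * dist y p) - cos (sqrt \<kappa> * dist x p))"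
proof (cases "y = p")
  case True
  have "L \<le> 0" using slope[of 1] g True by (simp add: geodesic_path_def)
  then have "\<kappa> * L \<le> 0" using kappa_pos by (simp add: mult_nonneg_nonpos)
  moreover have "0 \<le> 3 * (1 + 1/c0^2) * (cos (sqrt \<kappa> * dist y p) - cos (sqrt \<kappa> * dist x p))"
    using True by (intro mult_nonneg_nonneg) auto
  ultimately show ?thesis by linarith
next
  case False
  define ca where "ca = cos (sqrt \<kappa> * dist x y)"
  define cb where "cb = cos (sqrt \<kappa> * dist x p)"
  define D where "D = sqrt \<kappa> * dist y p"
  define K where "K = 1 + 1/c0^2"
  have K0: "K > 0" using c0 by (simp add: K_def add_pos_nonneg)
  have D0: "D > 0" using False sqrt_kappa_pos by (simp add: D_def)
  have Dl: "D < pi/2" using scaled_dist_bounds by (simp add: D_def)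
  have sD: "sin D > 0" using D0 Dl by (intro sin_gt_zero) auto
  have cD: "0 \<le> cos D" "cos D \<le> 1" using D0 Dl by (auto intro!: cos_ge_zero)
  have ca1: "ca \<le> 1" "0 < ca" using cos_scaled_dist_pos by (auto simp: ca_def)
  have pyth: "cb \<le> ca * cos D"
    using cos_dist_le_of_nearest[OF g nearest] by (simp add: ca_def cb_def D_def)
  have "\<kappa> * L * sin D / K \<le> ((sin D - sin ((1-t)*D)) * ca - sin (t*D) * cb) / t"
    if t: "0 < t" "t \<le> 1" for t
  proof -
    define ct where "ct = cos (sqrt \<kappa> * dist x (\<gamma> (t * dist y p)))"
    have cmp: "sin ((1-t) * D) * ca + sin (t * D) * cb \<le> sin D * ct"
      using cos_dist_geodesic_ge[OF g False, of t x] t by (simp add: D_def ca_def cb_def ct_def)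
    have "cb \<le> ct"
      using dist_geodesic_le_of_nearest[OF g nearest, of t] t
      by (simp add: cb_def ct_def cos_scaled_dist_le_iff)
    then have "c0 \<le> ct" using c0 by (simp add: cb_def)
    have "\<kappa> * (t * L) \<le> \<kappa> * (Psi \<kappa> x (\<gamma> (t * dist y p)) - Psi \<kappa> x y)"
      using slope[OF t] kappa_pos by (intro mult_left_mono) auto
    also have "\<dots> \<le> K * (ca - ct)"
      using Psi_diff_le[OF c0(1) \<open>c0 \<le> ct\<close>[unfolded ct_def]] nearest[of "t * dist y p"] t
      by (simp add: K_def ca_def ct_def mult_left_le_one_le)
    also have "\<dots> \<le> K * (ca - (sin ((1-t) * D) * ca + sin (t * D) * cb) / sin D)"
      using cmp sD K0 by (intro mult_left_mono) (auto simp: field_simps)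
    finally show ?thesis using t sD K0 by (simp add: field_simps)
  qed
  then have "\<kappa> * L * sin D / K \<le> D * cos D * ca - D * cb"
    by (rule difference_quotient_sin_bound[OF D0])
  also have "\<dots> = D * (cos D * ca - cb)" by (simp add: algebra_simps)
  also have "\<dots> \<le> (3 * sin D) * (cos D * ca - cb)"
    using le_three_sin[of D] D0 Dl pyth pi_half_less_two by (intro mult_right_mono) (auto simp: mult.commute)
  also have "\<dots> \<le> (3 * sin D) * (cos D - cb)"
    using sD ca1 cD by (intro mult_left_mono) (auto simp: mult_left_le)
  finally have "(\<kappa> * L / K) * sin D \<le> (3 * (cos D - cb)) * sin D" by (simp add: mult_ac)
  hence "\<kappa> * L / K \<le> 3 * (cos D - cb)" using sD by (simp only: mult_le_cancel_right_pos)
  hence "\<kappa> * L \<le> K * (3 * (cos D - cb))" using K0 by (simp add: divide_le_eq mult.commute)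
  then show ?thesis by (simp add: K_def D_def cb_def algebra_simps)
qed

definition midpoint_cos_concave :: "'a set \<Rightarrow> ('a \<Rightarrow> real) \<Rightarrow> bool" where
  "midpoint_cos_concave S \<psi> \<longleftrightarrow> (\<forall>u\<in>S. \<forall>v\<in>S. \<forall>\<gamma>. geodesic_path \<gamma> u v \<longrightarrow>
     \<psi> u + \<psi> v \<le> 2 * cos (sqrt \<kappa> * dist u v / 2) * \<psi> (\<gamma> (dist u v / 2)))"

lemma midpoint_cos_concaveD:
  "midpoint_cos_concave S \<psi> \<Longrightarrow> u \<in> S \<Longrightarrow> v \<in> S \<Longrightarrow> geodesic_path \<gamma> u v \<Longrightarrow>
     \<psi> u + \<psi> v \<le> 2 * cos (sqrt \<kappa> * dist u v / 2) * \<psi> (\<gamma> (dist u v / 2))"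
  unfolding midpoint_cos_concave_def by blast

lemma geod_convex_set_midpoint:
  "geod_convex_set S \<Longrightarrow> u \<in> S \<Longrightarrow> v \<in> S \<Longrightarrow> geodesic_path \<gamma> u v \<Longrightarrow> \<gamma> (dist u v / 2) \<in> S"
  unfolding geod_convex_set_def by auto

lemma cos_half_scaled_dist_bounds:
  "0 \<le> cos (sqrt \<kappa> * dist (u::'a) v / 2)" "sqrt \<kappa> * dist u v / 2 \<le> pi"
  using scaled_dist_bounds[of u v] by (auto intro!: cos_ge_zero)

lemma midpoint_cos_concave_maximizing_Cauchy:
  fixes w :: "nat \<Rightarrow> 'a"
  assumes convex: "geod_convex_set S" and concave: "midpoint_cos_concave S \<psi>"
    and bound: "\<And>v. v \<in> S \<Longrightarrow> \<psi> v \<le> c" and c: "c > 0"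
    and wS: "\<And>j. w j \<in> S" and lim: "(\<lambda>j. \<psi> (w j)) \<longlonglongrightarrow> c"
  shows "Cauchy w"
proof (rule metric_CauchyI)
  fix e :: real assume e: "e > 0"
  define e' where "e' = min e (pi / (2 * sqrt \<kappa>))"
  define q where "q = cos (sqrt \<kappa> * e' / 2)"
  have "0 < sqrt \<kappa> * e' / 2" "sqrt \<kappa> * e' / 2 \<le> pi / 4"
    using e sqrt_kappa_pos by (auto simp: e'_def min_def field_simps)
  then have "cos (sqrt \<kappa> * e' / 2) < cos 0" using pi_gt_zero by (intro cos_monotone_0_pi) linarith+
  then have q: "q < 1" by (simp add: q_def)
  obtain N where N: "\<And>j. N \<le> j \<Longrightarrow> c - c * (1 - q) / 2 < \<psi> (w j)"
    using order_tendstoD(1)[OF lim, of "c - c * (1 - q) / 2"] c q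
    by (auto simp: eventually_sequentially)
  have "dist (w m) (w n) < e" if mn: "N \<le> m" "N \<le> n" for m n
  proof (rule ccontr)
    assume "\<not> dist (w m) (w n) < e"
    then have "sqrt \<kappa> * e' / 2 \<le> sqrt \<kappa> * dist (w m) (w n) / 2"
      using sqrt_kappa_pos by (simp add: e'_def)
    then have cq: "cos (sqrt \<kappa> * dist (w m) (w n) / 2) \<le> q"
      unfolding q_def using e sqrt_kappa_pos cos_half_scaled_dist_bounds
      by (intro cos_monotone_0_pi_le) (auto simp: e'_def)
    obtain \<gamma> where g: "geodesic_path \<gamma> (w m) (w n)" using geodesic_exists by blast
    have "\<psi> (w m) + \<psi> (w n) \<le> 2 * cos (sqrt \<kappa> * dist (w m) (w n) / 2) * \<psi> (\<gamma> (dist (w m) (w n) / 2))"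
      using midpoint_cos_concaveD[OF concave wS wS g] .
    also have "\<dots> \<le> 2 * cos (sqrt \<kappa> * dist (w m) (w n) / 2) * c"
      using cos_half_scaled_dist_bounds bound[OF geod_convex_set_midpoint[OF convex wS wS g]]
      by (intro mult_left_mono) auto
    also have "\<dots> \<le> 2 * q * c" using cq c by (intro mult_right_mono) auto
    finally have "c < c * q" using N[OF mn(1)] N[OF mn(2)] by argo
    moreover have "c * q < c * 1" using c q by (intro mult_strict_left_mono)
    ultimately show False by simp
  qed
  then show "\<exists>M. \<forall>m\<ge>M. \<forall>n\<ge>M. dist (w m) (w n) < e" by blast
qed

text \<open>The midpoint inequality plays the role of uniform concavity: maximizing sequences are
  Cauchy, and completeness provides the maximizer.\<close>
lemma midpoint_cos_concave_has_max:
  assumes complete: "complete (UNIV :: 'a set)"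
    and S: "closed S" "geod_convex_set S" and concave: "midpoint_cos_concave S \<psi>"
    and bdd: "bdd_above (\<psi> ` S)" and cont: "continuous_on S \<psi>"
    and pos: "w0 \<in> S" "\<psi> w0 > 0"
  shows "\<exists>u\<in>S. \<forall>w\<in>S. \<psi> w \<le> \<psi> u"
proof -
  define c where "c = Sup (\<psi> ` S)"
  have le_c: "\<psi> w \<le> c" if "w \<in> S" for w using bdd that by (auto simp: c_def intro: cSUP_upper)
  have c0: "c > 0" using le_c[OF pos(1)] pos by simp
  have "\<exists>w\<in>S. c - 1/(real j + 1) < \<psi> w" for j
    using less_cSUP_iff[OF _ bdd, of "c - 1/(real j + 1)"] pos(1) by (auto simp: c_def)
  then obtain w where wS: "\<And>j. w j \<in> S" and wc: "\<And>j. c - 1/(real j + 1) < \<psi> (w j)" by metis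
  have lim: "(\<lambda>j. \<psi> (w j)) \<longlonglongrightarrow> c"
  proof (rule tendsto_sandwich[of "\<lambda>j. c - 1/(real j + 1)" _ _ "\<lambda>j. c"])
    show "(\<lambda>j. c - 1/(real j + 1)) \<longlonglongrightarrow> c"
      using tendsto_diff[OF tendsto_const[of c] LIMSEQ_inverse_real_of_nat]
      by (simp add: inverse_eq_divide add.commute)
  qed (use wc le_c wS in \<open>auto intro: less_imp_le always_eventually\<close>)
  obtain u where u: "w \<longlonglongrightarrow> u"
    using complete midpoint_cos_concave_maximizing_Cauchy[OF S(2) concave le_c c0 wS lim]
    unfolding complete_def by blast
  have uS: "u \<in> S" using S(1) wS u closed_sequentially by blast
  have "(\<lambda>j. \<psi> (w j)) \<longlonglongrightarrow> \<psi> u"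
    using continuous_on_tendsto_compose[OF cont u uS] wS by simp
  then have "\<psi> u = c" using LIMSEQ_unique lim by blast
  then show ?thesis using uS le_c by auto
qed

lemma midpoint_cos_concave_max_unique:
  assumes concave: "midpoint_cos_concave S \<psi>" and convex: "geod_convex_set S"
    and u: "u \<in> S" "\<forall>w\<in>S. \<psi> w \<le> \<psi> u" and v: "v \<in> S" "\<psi> v = \<psi> u" and pos: "\<psi> u > 0"
  shows "v = u"
proof (rule ccontr)
  assume "v \<noteq> u"
  obtain \<gamma> where g: "geodesic_path \<gamma> u v" using geodesic_exists by blast
  have "cos (sqrt \<kappa> * dist u v / 2) < cos 0"
    using \<open>v \<noteq> u\<close> sqrt_kappa_pos cos_half_scaled_dist_bounds by (intro cos_monotone_0_pi) auto
  then have "2 * cos (sqrt \<kappa> * dist u v / 2) * \<psi> u < 2 * \<psi> u" using pos by simp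
  moreover have "2 * \<psi> u \<le> 2 * cos (sqrt \<kappa> * dist u v / 2) * \<psi> (\<gamma> (dist u v / 2))"
    using midpoint_cos_concaveD[OF concave u(1) v(1) g] v(2) by simp
  moreover have "\<dots> \<le> 2 * cos (sqrt \<kappa> * dist u v / 2) * \<psi> u"
    using u(2) geod_convex_set_midpoint[OF convex u(1) v(1) g] cos_half_scaled_dist_bounds
    by (intro mult_left_mono) auto
  ultimately show False by linarith
qed

lemma asym_r_eq_asym_dist: "asym_r u s = ereal (asym_dist s (u::'a))"
  and asym_dist_nonneg: "0 \<le> asym_dist s u"
  and scaled_asym_dist_le: "sqrt \<kappa> * asym_dist s u \<le> pi / 2"
proof -
  have up: "asym_r u s \<le> ereal (pi / (2 * sqrt \<kappa>))"
    unfolding asym_r_def by (intro Limsup_bounded always_eventually) (simp add: less_imp_le[OF diameter])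
  have lo: "0 \<le> asym_r u s"
    unfolding asym_r_def by (intro le_Limsup) auto
  from up lo obtain r where r: "asym_r u s = ereal r" by (cases "asym_r u s") auto
  then show "asym_r u s = ereal (asym_dist s u)" by (simp add: asym_dist_def)
  show "0 \<le> asym_dist s u" using lo r by (simp add: asym_dist_def)
  have "asym_dist s u \<le> pi / (2 * sqrt \<kappa>)" using up r by (simp add: asym_dist_def)
  then show "sqrt \<kappa> * asym_dist s u \<le> pi / 2" using sqrt_kappa_pos by (simp add: field_simps)
qed

lemma eventually_dist_less_asym_dist:
  "e > 0 \<Longrightarrow> eventually (\<lambda>n. dist u (s n) < asym_dist s (u::'a) + e) sequentially"
proof -
  assume "e > 0"
  then have "Limsup sequentially (\<lambda>n. ereal (dist u (s n))) < ereal (asym_dist s u + e)"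
    using asym_r_eq_asym_dist[of u s] by (simp add: asym_r_def)
  then have "eventually (\<lambda>n. ereal (dist u (s n)) < ereal (asym_dist s u + e)) sequentially"
    by (rule Limsup_lessD)
  then show ?thesis by simp
qed

lemma frequently_dist_greater_asym_dist:
  assumes "e > 0"
  shows "frequently (\<lambda>n. asym_dist s (u::'a) - e < dist u (s n)) sequentially"
proof (rule ccontr)
  assume "\<not> ?thesis"
  hence "eventually (\<lambda>n. ereal (dist u (s n)) \<le> ereal (asym_dist s u - e)) sequentially"
    by (simp add: not_frequently not_less)
  hence "asym_r u s \<le> ereal (asym_dist s u - e)" unfolding asym_r_def by (rule Limsup_bounded)
  then show False using assms by (simp add: asym_r_eq_asym_dist)
qed

lemma asym_dist_le:
  assumes "\<And>e. e > 0 \<Longrightarrow> eventually (\<lambda>n. dist (u::'a) (s n) < r + e) sequentially"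
  shows "asym_dist s u \<le> r"
proof (rule field_le_epsilon)
  fix e :: real assume "e > 0"
  have "eventually (\<lambda>n. ereal (dist u (s n)) \<le> ereal (r + e)) sequentially"
    using assms[OF \<open>e > 0\<close>] by (auto elim: eventually_mono)
  hence "asym_r u s \<le> ereal (r + e)" unfolding asym_r_def by (rule Limsup_bounded)
  then show "asym_dist s u \<le> r + e" by (simp add: asym_r_eq_asym_dist)
qed

lemma asym_dist_mono:
  assumes "eventually (\<lambda>n. dist v (s n) \<le> dist (u::'a) (s n)) sequentially"
  shows "asym_dist s v \<le> asym_dist s u"
proof (rule asym_dist_le)
  fix e :: real assume "e > 0"
  show "eventually (\<lambda>n. dist v (s n) < asym_dist s u + e) sequentially"
    using eventually_conj[OF assms eventually_dist_less_asym_dist[OF \<open>e > 0\<close>, of u s]]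
    by (auto elim: eventually_mono)
qed

lemma asym_dist_le_add_dist: "asym_dist s v \<le> asym_dist s u + dist (u::'a) v"
proof (rule asym_dist_le)
  fix e :: real assume "e > 0"
  show "eventually (\<lambda>n. dist v (s n) < asym_dist s u + dist u v + e) sequentially"
    using eventually_dist_less_asym_dist[OF \<open>e > 0\<close>, of u s]
  proof (rule eventually_mono)
    fix n assume "dist u (s n) < asym_dist s u + e"
    moreover have "dist v (s n) \<le> dist u v + dist u (s n)" by (metis dist_commute dist_triangle)
    ultimately show "dist v (s n) < asym_dist s u + dist u v + e" by linarith
  qed
qed

lemma continuous_on_asym_dist: "continuous_on UNIV (asym_dist (s :: nat \<Rightarrow> 'a))"
  unfolding continuous_on_iff
proof (intro ballI allI impI)
  fix u :: 'a and e :: real assume "e > 0"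
  have "dist (asym_dist s v) (asym_dist s u) < e" if "dist v u < e" for v
    using that asym_dist_le_add_dist[of s u v] asym_dist_le_add_dist[of s v u]
    by (simp add: dist_real_def dist_commute abs_less_iff)
  then show "\<exists>d>0. \<forall>v\<in>UNIV. dist v u < d \<longrightarrow> dist (asym_dist s v) (asym_dist s u) < e"
    using \<open>e > 0\<close> by blast
qed

lemma asym_dist_eq_lim:
  assumes "(\<lambda>n. dist (u::'a) (s n)) \<longlonglongrightarrow> L"
  shows "asym_dist s u = L"
proof -
  have "(\<lambda>n. ereal (dist u (s n))) \<longlonglongrightarrow> ereal L" using assms by (simp add: tendsto_ereal)
  hence "asym_r u s = ereal L" unfolding asym_r_def by (intro lim_imp_Limsup) auto
  then show ?thesis by (simp add: asym_r_eq_asym_dist)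
qed

text \<open>The midpoint inequality of \<open>cos (\<surd>\<kappa> d(\<cdot>, s n))\<close> passes to the limit superior, at the
  cost of an error \<open>\<surd>\<kappa> e\<close> per term since \<open>cos\<close> is 1-Lipschitz.\<close>
lemma midpoint_cos_concave_asym_dist:
  "midpoint_cos_concave UNIV (\<lambda>u. cos (sqrt \<kappa> * asym_dist s (u::'a)))"
  unfolding midpoint_cos_concave_def
proof (intro ballI allI impI)
  fix u v :: 'a and \<gamma> assume g: "geodesic_path \<gamma> u v"
  define m where "m = \<gamma> (dist u v / 2)"
  define C where "C = cos (sqrt \<kappa> * dist u v / 2)"
  have C: "0 \<le> C" "C \<le> 1" using cos_half_scaled_dist_bounds[of u v] by (auto simp: C_def)
  have bounds: "0 \<le> sqrt \<kappa> * asym_dist s w" "sqrt \<kappa> * asym_dist s w \<le> pi" for w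
    using asym_dist_nonneg[of s w] scaled_asym_dist_le[of s w] sqrt_kappa_pos pi_gt_zero
    by (simp, linarith)
  have approx: "cos (sqrt \<kappa> * asym_dist s u) + cos (sqrt \<kappa> * asym_dist s v)
      \<le> 2 * C * cos (sqrt \<kappa> * asym_dist s m) + 4 * sqrt \<kappa> * e" if e: "e > 0" for e
  proof -
    have "frequently (\<lambda>n. asym_dist s m - e < dist m (s n) \<and>
        dist u (s n) < asym_dist s u + e \<and> dist v (s n) < asym_dist s v + e) sequentially"
      using frequently_eventually_frequently[OF frequently_dist_greater_asym_dist[OF e]
          eventually_conj[OF eventually_dist_less_asym_dist[OF e] eventually_dist_less_asym_dist[OF e]]] .
    then obtain n where n: "asym_dist s m - e < dist m (s n)"
        "dist u (s n) < asym_dist s u + e" "dist v (s n) < asym_dist s v + e"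
      by (auto dest: frequently_ex)
    have ke: "0 \<le> sqrt \<kappa> * e" using e sqrt_kappa_pos by simp
    have scale: "sqrt \<kappa> * a < sqrt \<kappa> * b + sqrt \<kappa> * e" if "a < b + e" for a b
      using that sqrt_kappa_pos by (simp add: distrib_left[symmetric])
    have dist_bounds: "0 \<le> sqrt \<kappa> * dist w (s n)" "sqrt \<kappa> * dist w (s n) \<le> pi" for w
      using scaled_dist_bounds[of w "s n"] pi_gt_zero by linarith+
    have "cos (sqrt \<kappa> * asym_dist s u) - sqrt \<kappa> * e \<le> cos (sqrt \<kappa> * dist u (s n))"
      "cos (sqrt \<kappa> * asym_dist s v) - sqrt \<kappa> * e \<le> cos (sqrt \<kappa> * dist v (s n))"
      "cos (sqrt \<kappa> * dist m (s n)) - sqrt \<kappa> * e \<le> cos (sqrt \<kappa> * asym_dist s m)"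
      using cos_ge_cos_minus[OF dist_bounds(1) bounds scale[OF n(2)] ke]
        cos_ge_cos_minus[OF dist_bounds(1) bounds scale[OF n(3)] ke]
        cos_ge_cos_minus[OF bounds(1) dist_bounds scale ke, of m] n(1)
      by (simp_all add: algebra_simps)
    moreover have "cos (sqrt \<kappa> * dist u (s n)) + cos (sqrt \<kappa> * dist v (s n))
        \<le> 2 * C * cos (sqrt \<kappa> * dist m (s n))"
      using cos_dist_midpoint_ge[OF g, of "s n"] by (simp add: C_def m_def dist_commute)
    moreover have "2 * C * cos (sqrt \<kappa> * dist m (s n)) \<le> 2 * C * (cos (sqrt \<kappa> * asym_dist s m) + sqrt \<kappa> * e)"
      using calculation(3) C by (intro mult_left_mono) auto
    moreover have "C * (sqrt \<kappa> * e) \<le> sqrt \<kappa> * e" using C ke by (intro mult_left_le_one_le)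
    ultimately show ?thesis by (simp add: distrib_left)
  qed
  then have "cos (sqrt \<kappa> * asym_dist s u) + cos (sqrt \<kappa> * asym_dist s v)
      \<le> 2 * C * cos (sqrt \<kappa> * asym_dist s m) + e" if "e > 0" for e
    using approx[of "e / (4 * sqrt \<kappa>)"] that sqrt_kappa_pos by simp
  then show "cos (sqrt \<kappa> * asym_dist s u) + cos (sqrt \<kappa> * asym_dist s v)
      \<le> 2 * cos (sqrt \<kappa> * dist u v / 2) * cos (sqrt \<kappa> * asym_dist s (\<gamma> (dist u v / 2)))"
    unfolding C_def m_def by (rule field_le_epsilon)
qed

lemma asym_center_eq_singleton:
  assumes "\<And>w. w \<noteq> u \<Longrightarrow> asym_dist s u < asym_dist s (w::'a)"
  shows "asym_center s = {u}"
proof -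
  have le: "asym_dist s u \<le> asym_dist s w" for w
    using assms[of w] by (cases "w = u") auto
  have "asym_radius s = ereal (asym_dist s u)"
    unfolding asym_radius_def
  proof (rule antisym)
    show "(INF w. asym_r w s) \<le> ereal (asym_dist s u)" by (metis INF_lower UNIV_I asym_r_eq_asym_dist)
    show "ereal (asym_dist s u) \<le> (INF w. asym_r w s)" by (rule INF_greatest) (simp add: asym_r_eq_asym_dist le)
  qed
  then show ?thesis using assms by (force simp: asym_center_def asym_r_eq_asym_dist)
qed

lemma asym_dist_unique_minimizer:
  fixes s :: "nat \<Rightarrow> 'a"
  assumes complete: "complete (UNIV :: 'a set)" and w0: "sqrt \<kappa> * asym_dist s w0 < pi / 2"
  obtains u where "\<And>w. w \<noteq> u \<Longrightarrow> asym_dist s u < asym_dist s w"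
proof -
  define \<psi> where "\<psi> w = cos (sqrt \<kappa> * asym_dist s w)" for w
  have bounds: "0 \<le> sqrt \<kappa> * asym_dist s w" "sqrt \<kappa> * asym_dist s w \<le> pi" for w
    using asym_dist_nonneg[of s w] scaled_asym_dist_le[of s w] sqrt_kappa_pos pi_gt_zero
    by (simp, linarith)
  have convex: "geod_convex_set (UNIV :: 'a set)" by (simp add: geod_convex_set_def)
  have concave: "midpoint_cos_concave UNIV \<psi>"
    unfolding \<psi>_def by (rule midpoint_cos_concave_asym_dist)
  have "continuous_on UNIV \<psi>"
    unfolding \<psi>_def using continuous_on_asym_dist by (intro continuous_intros)
  moreover have "bdd_above (range \<psi>)" by (intro bdd_aboveI[of _ 1]) (auto simp: \<psi>_def)
  moreover have pos: "\<psi> w0 > 0"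
    using w0 bounds(1)[of w0] pi_gt_zero by (auto simp: \<psi>_def intro!: cos_gt_zero_pi)
  ultimately obtain u where u: "\<And>w. \<psi> w \<le> \<psi> u"
    using midpoint_cos_concave_has_max[OF complete closed_UNIV convex concave] by blast
  have "asym_dist s u < asym_dist s w" if "w \<noteq> u" for w
  proof -
    have "sqrt \<kappa> * asym_dist s u \<le> sqrt \<kappa> * asym_dist s w"
      using u[of w] bounds by (simp add: \<psi>_def cos_mono_le_eq)
    then have "asym_dist s u \<le> asym_dist s w" using sqrt_kappa_pos by simp
    moreover have "\<psi> w \<noteq> \<psi> u"
      using midpoint_cos_concave_max_unique[OF concave convex, of u w] u pos u[of w0] that by auto
    ultimately show ?thesis unfolding \<psi>_def by (cases "asym_dist s u = asym_dist s w") auto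
  qed
  then show ?thesis by (rule that)
qed

end

locale proximal_point = small_CAT \<kappa> ty for \<kappa> and ty :: "'a::metric_space itself" +
  fixes f :: "'a \<Rightarrow> ereal" and lam :: "nat \<Rightarrow> real" and x :: "nat \<Rightarrow> 'a"
  assumes complete: "complete (UNIV :: 'a set)"
    and proper: "proper_fun f" and convex: "geod_convex_fun f" and lsc: "lsc_fun f"
    and has_min: "\<exists>m. \<forall>y. f m \<le> f y"
    and lam_pos: "\<And>n. lam n > 0" and lam_not_summable: "\<not> summable lam"
    and resolvent: "\<And>n. x (Suc n) \<in> resolvent_set \<kappa> f (lam n) (x n)"
begin

definition minimizers :: "'a set" where
  "minimizers = {m. \<forall>y. f m \<le> f y}"

definition pmin :: 'a where
  "pmin = (SOME m. m \<in> minimizers)"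

definition fmin :: real where
  "fmin = real_of_ereal (f pmin)"

text \<open>Indexed like \<open>lam\<close>: \<open>fval n\<close> is the value at the resolvent output \<open>x (Suc n)\<close>.\<close>
definition fval :: "nat \<Rightarrow> real" where
  "fval n = real_of_ereal (f (x (Suc n)))"

lemma f_finite: "f w \<noteq> \<infinity> \<Longrightarrow> f w = ereal (real_of_ereal (f w))"
  using proper by (cases "f w") (auto simp: proper_fun_def)

lemma pmin_minimizer: "pmin \<in> minimizers"
proof -
  obtain m where "m \<in> minimizers" using has_min by (auto simp: minimizers_def)
  then show ?thesis unfolding pmin_def by (rule someI)
qed

lemma f_pmin: "f pmin = ereal fmin"
proof -
  obtain z where "f z \<noteq> \<infinity>" using proper by (auto simp: proper_fun_def)
  then have "f pmin \<noteq> \<infinity>" using pmin_minimizer by (auto simp: minimizers_def top_unique)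
  then show ?thesis using f_finite by (simp add: fmin_def)
qed

lemma fmin_le: "ereal fmin \<le> f y"
  using pmin_minimizer f_pmin by (auto simp: minimizers_def)

lemma f_minimizer: "m \<in> minimizers \<Longrightarrow> f m = ereal fmin"
  using fmin_le[of m] f_pmin by (metis antisym mem_Collect_eq minimizers_def)

lemma resolvent_le:
  "f (x (Suc n)) + ereal (Psi \<kappa> (x n) (x (Suc n)) / lam n) \<le> f z + ereal (Psi \<kappa> (x n) z / lam n)"
  using resolvent by (auto simp: resolvent_set_def)

lemma f_iterate: "f (x (Suc n)) = ereal (fval n)"
proof -
  have "f (x (Suc n)) + ereal (Psi \<kappa> (x n) (x (Suc n)) / lam n) \<le> ereal (fmin + Psi \<kappa> (x n) pmin / lam n)"
    using resolvent_le[of n pmin] f_pmin by simp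
  then have "f (x (Suc n)) \<noteq> \<infinity>" by auto
  then show ?thesis using f_finite by (simp add: fval_def)
qed

lemma fmin_le_fval: "fmin \<le> fval n"
  using fmin_le[of "x (Suc n)"] by (simp add: f_iterate)

lemma resolvent_le_real:
  "f z = ereal a \<Longrightarrow> fval n + Psi \<kappa> (x n) (x (Suc n)) / lam n \<le> a + Psi \<kappa> (x n) z / lam n"
  using resolvent_le[of n z] by (simp add: f_iterate)

lemma convex_finite:
  assumes g: "geodesic_path \<gamma> u v" and t: "0 \<le> t" "t \<le> 1" and "f u = ereal b" "f v = ereal a"
  obtains c where "f (\<gamma> (t * dist u v)) = ereal c" "c \<le> (1-t) * b + t * a"
proof -
  have "f (\<gamma> (t * dist u v)) \<le> ereal (1 - t) * f u + ereal t * f v"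
    using convex g t unfolding geod_convex_fun_def by auto
  also have "\<dots> = ereal ((1-t) * b + t * a)" by (simp add: assms)
  finally have le: "f (\<gamma> (t * dist u v)) \<le> ereal ((1-t) * b + t * a)" .
  then have "f (\<gamma> (t * dist u v)) \<noteq> \<infinity>" by auto
  then show ?thesis using that le f_finite by (metis ereal_less_eq(3))
qed

text \<open>Convexity of \<open>f\<close> makes \<open>f\<close> not exceed \<open>f (x (n+1))\<close> on \<open>[x (n+1), m]\<close>, so the
  minimality of \<open>x (n+1)\<close> for \<open>f + \<Psi>\<^bsub>x n\<^esub> / \<lambda>\<^sub>n\<close> forces \<open>\<Psi>\<^bsub>x n\<^esub>\<close>, hence the distance
  to \<open>x n\<close>, to be minimal at \<open>x (n+1)\<close> along that geodesic.\<close>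
lemma iterate_nearest_on_geodesic:
  assumes m: "m \<in> minimizers" and g: "geodesic_path \<gamma> (x (Suc n)) m"
    and s: "0 \<le> s" "s \<le> dist (x (Suc n)) m"
  shows "dist (x n) (x (Suc n)) \<le> dist (x n) (\<gamma> s)"
proof (cases "x (Suc n) = m")
  case True
  then show ?thesis using g s by (simp add: geodesic_path_def)
next
  case False
  define t where "t = s / dist (x (Suc n)) m"
  have t: "0 \<le> t" "t \<le> 1" "s = t * dist (x (Suc n)) m" using s False by (auto simp: t_def)
  obtain c where c: "f (\<gamma> s) = ereal c" "c \<le> (1-t) * fval n + t * fmin"
    using convex_finite[OF g t(1,2) f_iterate f_minimizer[OF m]] t(3) by metis
  have "(1-t) * fval n + t * fmin \<le> (1-t) * fval n + t * fval n"
    using fmin_le_fval t by (intro add_left_mono mult_left_mono) auto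
  then have "c \<le> fval n" using c by (simp add: algebra_simps)
  then have "Psi \<kappa> (x n) (x (Suc n)) / lam n \<le> Psi \<kappa> (x n) (\<gamma> s) / lam n"
    using resolvent_le_real[OF c(1), of n] by linarith
  then have "Psi \<kappa> (x n) (x (Suc n)) \<le> Psi \<kappa> (x n) (\<gamma> s)"
    using lam_pos[of n] by (simp add: divide_le_cancel)
  then show ?thesis by (rule Psi_le_imp_dist_le)
qed

lemma dist_iterate_minimizer_Suc_le:
  assumes "m \<in> minimizers"
  shows "dist (x (Suc n)) m \<le> dist (x n) m"
proof -
  obtain \<gamma> where g: "geodesic_path \<gamma> (x (Suc n)) m" using geodesic_exists by blast
  have "cos (sqrt \<kappa> * dist (x n) m)
      \<le> cos (sqrt \<kappa> * dist (x n) (x (Suc n))) * cos (sqrt \<kappa> * dist (x (Suc n)) m)"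
    using cos_dist_le_of_nearest[OF g] iterate_nearest_on_geodesic[OF assms g] by simp
  also have "\<dots> \<le> cos (sqrt \<kappa> * dist (x (Suc n)) m)"
    using cos_scaled_dist_pos[of "x (Suc n)" m] by (simp add: mult_left_le_one_le)
  finally show ?thesis by (simp add: cos_scaled_dist_le_iff)
qed

lemma decseq_dist_minimizer: "m \<in> minimizers \<Longrightarrow> decseq (\<lambda>n. dist (x n) m)"
  by (intro decseq_SucI dist_iterate_minimizer_Suc_le)

lemma dist_iterate_minimizer_le: "m \<in> minimizers \<Longrightarrow> dist (x n) m \<le> dist (x 0) m"
  using decseq_dist_minimizer by (simp add: decseq_def)

definition descent_const :: real where
  "descent_const = 3 * (1 + 1 / (cos (sqrt \<kappa> * dist (x 0) pmin))^2)"

lemma descent_estimate: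
  "\<kappa> * (lam n * (fval n - fmin))
    \<le> descent_const * (cos (sqrt \<kappa> * dist (x (Suc n)) pmin) - cos (sqrt \<kappa> * dist (x n) pmin))"
proof -
  obtain \<gamma> where g: "geodesic_path \<gamma> (x (Suc n)) pmin" using geodesic_exists by blast
  have "cos (sqrt \<kappa> * dist (x 0) pmin) \<le> cos (sqrt \<kappa> * dist (x n) pmin)"
    using dist_iterate_minimizer_le[OF pmin_minimizer] by (simp add: cos_scaled_dist_le_iff)
  moreover have "t * (lam n * (fval n - fmin))
      \<le> Psi \<kappa> (x n) (\<gamma> (t * dist (x (Suc n)) pmin)) - Psi \<kappa> (x n) (x (Suc n))"
    if t: "0 < t" "t \<le> 1" for t
  proof -
    obtain c where c: "f (\<gamma> (t * dist (x (Suc n)) pmin)) = ereal c" "c \<le> (1-t) * fval n + t * fmin"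
      using convex_finite[OF g _ t(2) f_iterate f_pmin] t by auto
    have "t * (fval n - fmin)
        \<le> (Psi \<kappa> (x n) (\<gamma> (t * dist (x (Suc n)) pmin)) - Psi \<kappa> (x n) (x (Suc n))) / lam n"
      using resolvent_le_real[OF c(1), of n] c(2) by (simp add: diff_divide_distrib algebra_simps)
    then show ?thesis using lam_pos[of n] by (simp add: le_divide_eq algebra_simps)
  qed
  ultimately show ?thesis
    unfolding descent_const_def
    using Psi_slope_bound[OF g iterate_nearest_on_geodesic[OF pmin_minimizer g] cos_scaled_dist_pos]
    by blast
qed

lemma fval_Suc_le: "fval (Suc n) \<le> fval n"
proof -
  have "fval (Suc n) + Psi \<kappa> (x (Suc n)) (x (Suc (Suc n))) / lam (Suc n) \<le> fval n"
    using resolvent_le_real[of "x (Suc n)" "fval n" "Suc n", OF f_iterate] by (simp add: Psi_self)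
  moreover have "0 \<le> Psi \<kappa> (x (Suc n)) (x (Suc (Suc n))) / lam (Suc n)"
    using Psi_nonneg lam_pos[of "Suc n"] by simp
  ultimately show ?thesis by linarith
qed

text \<open>Telescoping the descent estimate bounds \<open>\<Sum> \<lambda>\<^sub>n (fval n - fmin)\<close>, which is incompatible
  with \<open>\<Sum> \<lambda>\<^sub>n = \<infinity>\<close> if \<open>fval n - fmin\<close> stays above some \<open>e > 0\<close>.\<close>
lemma exists_fval_close_to_fmin:
  assumes e: "e > 0"
  shows "\<exists>N. fval N - fmin < e"
proof (rule ccontr)
  assume "\<nexists>N. fval N - fmin < e"
  hence ge: "\<And>n. e \<le> fval n - fmin" by (simp add: not_less)
  have "summable lam"
  proof (rule summableI_nonneg_bounded)
    show "0 \<le> lam n" for n using lam_pos[of n] by simp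
    fix N
    have "(\<Sum>n<N. lam n) * (\<kappa> * e) = (\<Sum>n<N. \<kappa> * (lam n * e))"
      by (simp add: sum_distrib_right sum_distrib_left algebra_simps)
    also have "\<dots> \<le> (\<Sum>n<N. \<kappa> * (lam n * (fval n - fmin)))"
      using ge lam_pos kappa_pos by (intro sum_mono mult_left_mono) (auto simp: less_imp_le)
    also have "\<dots> \<le> (\<Sum>n<N. descent_const
        * (cos (sqrt \<kappa> * dist (x (Suc n)) pmin) - cos (sqrt \<kappa> * dist (x n) pmin)))"
      by (intro sum_mono descent_estimate)
    also have "\<dots> = descent_const * (cos (sqrt \<kappa> * dist (x N) pmin) - cos (sqrt \<kappa> * dist (x 0) pmin))"
      by (simp add: sum_distrib_left[symmetric] sum_lessThan_telescope[of "\<lambda>n. cos (sqrt \<kappa> * dist (x n) pmin)"])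
    also have "\<dots> \<le> descent_const * 1"
    proof (rule mult_left_mono)
      show "cos (sqrt \<kappa> * dist (x N) pmin) - cos (sqrt \<kappa> * dist (x 0) pmin) \<le> 1"
        using cos_scaled_dist_pos[of "x 0" pmin] cos_le_one[of "sqrt \<kappa> * dist (x N) pmin"] by linarith
    qed (simp add: descent_const_def)
    finally show "(\<Sum>n<N. lam n) \<le> descent_const / (\<kappa> * e)" using kappa_pos e by (simp add: le_divide_eq)
  qed
  then show False using lam_not_summable by simp
qed

lemma eventually_f_iterate_le:
  assumes "e > 0"
  shows "eventually (\<lambda>n. f (x n) \<le> ereal (fmin + e)) sequentially"
proof -
  obtain N where N: "fval N - fmin < e" using exists_fval_close_to_fmin[OF assms] by blast
  have "f (x (Suc j)) \<le> ereal (fmin + e)" if "N \<le> j" for j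
    using N f_iterate[of j] decseqD[OF decseq_SucI[of fval, OF fval_Suc_le] that] by simp
  then show ?thesis unfolding eventually_sequentially by (metis Suc_le_D Suc_le_mono)
qed

definition sublevel :: "real \<Rightarrow> 'a set" where
  "sublevel e = {y. f y \<le> ereal (fmin + e)}"

lemma closed_sublevel: "closed (sublevel e)"
  using lsc by (simp add: sublevel_def lsc_fun_def)

lemma pmin_in_sublevel: "e \<ge> 0 \<Longrightarrow> pmin \<in> sublevel e"
  using f_pmin by (simp add: sublevel_def)

lemma geod_convex_sublevel: "geod_convex_set (sublevel e)"
  unfolding geod_convex_set_def
proof (intro ballI allI impI)
  fix u v \<gamma> s assume u: "u \<in> sublevel e" and v: "v \<in> sublevel e"
    and g: "geodesic_path \<gamma> u v \<and> 0 \<le> s \<and> s \<le> dist u v"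
  have finite: "\<exists>a. f w = ereal a \<and> a \<le> fmin + e" if "w \<in> sublevel e" for w
    using that f_finite[of w] by (cases "f w") (auto simp: sublevel_def)
  show "\<gamma> s \<in> sublevel e"
  proof (cases "u = v")
    case True
    then have "s = 0" using g by simp
    then show ?thesis using g u by (simp add: geodesic_path_def)
  next
    case False
    define t where "t = s / dist u v"
    have t: "0 \<le> t" "t \<le> 1" "s = t * dist u v" using g False by (auto simp: t_def)
    obtain a b where a: "f u = ereal a" "a \<le> fmin + e" and b: "f v = ereal b" "b \<le> fmin + e"
      using finite[OF u] finite[OF v] by blast
    obtain c where c: "f (\<gamma> s) = ereal c" "c \<le> (1-t) * a + t * b"
      using convex_finite[OF conjunct1[OF g] t(1,2) a(1) b(1)] t(3) by metis
    have "(1-t) * a + t * b \<le> (1-t) * (fmin + e) + t * (fmin + e)"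
      using a b t by (intro add_mono mult_left_mono) auto
    then show ?thesis using c by (simp add: sublevel_def algebra_simps)
  qed
qed

text \<open>Nearest-point projection onto a sublevel set; it is closer than \<open>u\<close> to every point of the
  set by the spherical Pythagoras inequality.\<close>
lemma sublevel_projection:
  assumes "e \<ge> 0"
  obtains P where "P \<in> sublevel e" "\<And>z. z \<in> sublevel e \<Longrightarrow> dist P z \<le> dist u z"
proof -
  have "\<exists>P\<in>sublevel e. \<forall>w\<in>sublevel e. cos (sqrt \<kappa> * dist u w) \<le> cos (sqrt \<kappa> * dist u P)"
  proof (rule midpoint_cos_concave_has_max[OF complete closed_sublevel geod_convex_sublevel])
    show "midpoint_cos_concave (sublevel e) (\<lambda>w. cos (sqrt \<kappa> * dist u w))"
      by (simp add: midpoint_cos_concave_def cos_dist_midpoint_ge)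
    show "bdd_above ((\<lambda>w. cos (sqrt \<kappa> * dist u w)) ` sublevel e)"
      by (intro bdd_aboveI[of _ 1]) auto
    show "continuous_on (sublevel e) (\<lambda>w. cos (sqrt \<kappa> * dist u w))"
      by (intro continuous_intros)
  qed (use pmin_in_sublevel[OF assms] cos_scaled_dist_pos in auto)
  then obtain P where P: "P \<in> sublevel e" "\<And>w. w \<in> sublevel e \<Longrightarrow> dist u P \<le> dist u w"
    by (auto simp: cos_scaled_dist_le_iff)
  have "dist P z \<le> dist u z" if z: "z \<in> sublevel e" for z
  proof -
    obtain \<gamma> where g: "geodesic_path \<gamma> P z" using geodesic_exists by blast
    have "cos (sqrt \<kappa> * dist u z) \<le> cos (sqrt \<kappa> * dist u P) * cos (sqrt \<kappa> * dist P z)"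
      using cos_dist_le_of_nearest[OF g] P(2) geod_convex_sublevel P(1) z g
      by (simp add: geod_convex_set_def)
    also have "\<dots> \<le> cos (sqrt \<kappa> * dist P z)"
      using cos_scaled_dist_pos[of P z] by (simp add: mult_left_le_one_le)
    finally show ?thesis by (simp add: cos_scaled_dist_le_iff)
  qed
  then show ?thesis using that P(1) by blast
qed

text \<open>If \<open>u\<close> were not a minimizer, it would lie outside some sublevel set that eventually contains
  the sequence; its projection \<open>P \<noteq> u\<close> onto that set would then be at least as close to all
  late terms, contradicting the strict minimality of \<open>asym_dist\<close> at \<open>u\<close>.\<close>
lemma strict_asym_dist_min_in_minimizers:
  assumes g: "strict_mono g"
    and u: "\<And>w. w \<noteq> u \<Longrightarrow> asym_dist (x \<circ> g) u < asym_dist (x \<circ> g) w"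
  shows "u \<in> minimizers"
proof -
  have "f u \<le> ereal fmin + ereal e" if e: "e > 0" for e
  proof -
    obtain P where P: "P \<in> sublevel e" "\<And>z. z \<in> sublevel e \<Longrightarrow> dist P z \<le> dist u z"
      using sublevel_projection[of e u] e by auto
    have "eventually (\<lambda>n. x (g n) \<in> sublevel e) sequentially"
      using eventually_subseq[OF g eventually_f_iterate_le[OF e]] by (simp add: sublevel_def)
    then have "eventually (\<lambda>n. dist P ((x \<circ> g) n) \<le> dist u ((x \<circ> g) n)) sequentially"
      by (auto elim: eventually_mono intro: P(2))
    then have "asym_dist (x \<circ> g) P \<le> asym_dist (x \<circ> g) u" by (rule asym_dist_mono)
    then have "P = u" using u[of P] by fastforce
    then show ?thesis using P(1) by (simp add: sublevel_def)
  qed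
  then have "f u \<le> ereal fmin" by (rule ereal_le_epsilon2)
  then show ?thesis using fmin_le by (auto simp: minimizers_def intro: order_trans)
qed

lemma asym_dist_subseq_minimizer:
  assumes "m \<in> minimizers"
  obtains L where "\<And>h. strict_mono h \<Longrightarrow> asym_dist (x \<circ> h) m = L"
proof -
  obtain L where L: "(\<lambda>n. dist (x n) m) \<longlonglongrightarrow> L"
    using decseq_convergent[OF decseq_dist_minimizer[OF assms], of 0] by auto
  show ?thesis
  proof (rule that)
    fix h :: "nat \<Rightarrow> nat" assume "strict_mono h"
    from LIMSEQ_subseq_LIMSEQ[OF L this]
    have "(\<lambda>n. dist m ((x \<circ> h) n)) \<longlonglongrightarrow> L" by (simp add: o_def dist_commute)
    then show "asym_dist (x \<circ> h) m = L" by (rule asym_dist_eq_lim)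
  qed
qed

lemma subseq_asym_center:
  assumes "strict_mono g"
  obtains u where "u \<in> minimizers" "\<And>w. w \<noteq> u \<Longrightarrow> asym_dist (x \<circ> g) u < asym_dist (x \<circ> g) w"
proof -
  have "dist pmin ((x \<circ> g) n) \<le> dist (x 0) pmin" for n
    using dist_iterate_minimizer_le[OF pmin_minimizer, of "g n"] by (simp add: dist_commute)
  then have "asym_dist (x \<circ> g) pmin \<le> dist (x 0) pmin"
    by (intro asym_dist_le always_eventually allI) (smt (verit) comp_apply)
  then have "sqrt \<kappa> * asym_dist (x \<circ> g) pmin < pi / 2"
    using mult_left_mono[of _ _ "sqrt \<kappa>"] scaled_dist_bounds(2)[of "x 0" pmin] sqrt_kappa_pos
    by (smt (verit))
  then obtain u where "\<And>w. w \<noteq> u \<Longrightarrow> asym_dist (x \<circ> g) u < asym_dist (x \<circ> g) w"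
    using asym_dist_unique_minimizer[OF complete] by blast
  then show ?thesis using that strict_asym_dist_min_in_minimizers[OF assms] by blast
qed

lemma Delta_converges_to_minimizer: "\<exists>m\<in>minimizers. Delta_converges x m"
proof -
  obtain u0 where u0: "u0 \<in> minimizers" "\<And>w. w \<noteq> u0 \<Longrightarrow> asym_dist (x \<circ> id) u0 < asym_dist (x \<circ> id) w"
    using subseq_asym_center[of id] by (auto simp: strict_mono_def)
  have "asym_center (x \<circ> g) = {u0}" if g: "strict_mono g" for g
  proof -
    obtain u where u: "u \<in> minimizers" "\<And>w. w \<noteq> u \<Longrightarrow> asym_dist (x \<circ> g) u < asym_dist (x \<circ> g) w"
      using subseq_asym_center[OF g] by blast
    obtain L where L: "\<And>h. strict_mono h \<Longrightarrow> asym_dist (x \<circ> h) u = L"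
      using asym_dist_subseq_minimizer[OF u(1)] by blast
    obtain L0 where L0: "\<And>h. strict_mono h \<Longrightarrow> asym_dist (x \<circ> h) u0 = L0"
      using asym_dist_subseq_minimizer[OF u0(1)] by blast
    have "u = u0"
    proof (rule ccontr)
      assume "u \<noteq> u0"
      then have "L < L0" "L0 < L"
        using u(2)[of u0] u0(2)[of u] L[OF g] L0[OF g] L[of id] L0[of id] by (auto simp: strict_mono_def)
      then show False by simp
    qed
    then show ?thesis using asym_center_eq_singleton[OF u(2)] by simp
  qed
  then show ?thesis using u0(1) by (auto simp: Delta_converges_def)
qed

end

theorem mainTheorem3:
  fixes \<kappa> :: real and f :: "'a::metric_space \<Rightarrow> ereal"
    and lam :: "nat \<Rightarrow> real" and x :: "nat \<Rightarrow> 'a"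
  assumes "\<kappa> > 0"
    and "complete (UNIV :: 'a set)"
    and "CAT_space \<kappa> TYPE('a)"
    and "\<forall>v w::'a. dist v w < pi / (2 * sqrt \<kappa>)"
    and "proper_fun f" and "geod_convex_fun f" and "lsc_fun f"
    and "\<exists>m. \<forall>y. f m \<le> f y"
    and "\<forall>n. lam n > 0" and "\<not> summable lam"
    and "\<forall>n. x (Suc n) \<in> resolvent_set \<kappa> f (lam n) (x n)"
  shows "\<exists>m. (\<forall>y. f m \<le> f y) \<and> Delta_converges x m"
proof -
  interpret proximal_point \<kappa> "TYPE('a)" f lam x
    by unfold_locales (use assms in auto)
  show ?thesis using Delta_converges_to_minimizer by (auto simp: minimizers_def)
qed

end
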